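(* Let $\psi\in(-\pi,\pi]$ and $\tau>0$. Then for every $(a,w)\in D_c$ and every $s>0$, $(sa,sw)\in\Gamma_c(\psi;\tau)$ if and only if $s = \frac{1}{\tau}\tau_c(a,w)$ and $\operatorname{Arg}(w) = \psi$.
   Context: $\operatorname{Arg}(w)\in(-\pi,\pi]$ is the principal argument; $\arccos:[-1,1]\to[0,\pi]$. $D_c := \{(a,w)\in\mathbb{R}\times(\mathbb{C}\setminus\{0\}):\operatorname{Re}(w)<a<|w|\}$; $\tau_c(a,w) := \frac{1}{\sqrt{|w|^2-a^2}}[|\operatorname{Arg}(w)|-\arccos(a/|w|)]$. For $\Omega\neq0$ with $\tau\Omega-\psi\notin\pi\mathbb{Z}$: $a(\Omega,\psi;\tau) := -\Omega\cot(\tau\Omega-\psi)$, $\rho(\Omega,\psi;\tau) := -\Omega/\sin(\tau\Omega-\psi)$. $I_c(\psi) := (0,\psi)$ if $\psi\ge0$ and $(\psi,0)$ if $\psi\le0$. $\Gamma_c(\psi;\tau) := \{(a(\Omega,\psi;\tau),\,\rho(\Omega,\psi;\tau)e^{i\psi}) : \tau\Omega\in I_c(\psi)\}\subset\mathbb{R}\times\mathbb{C}$. *)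

theory Defs
  imports "HOL-Analysis.Analysis"
begin

definition D_c :: "(real \<times> complex) set" where
  "D_c = {(a, w). w \<noteq> 0 \<and> Re w < a \<and> a < cmod w}"

definition tau_c :: "real \<Rightarrow> complex \<Rightarrow> real" where
  "tau_c a w = (1 / sqrt ((cmod w)\<^sup>2 - a\<^sup>2)) * (\<bar>Arg w\<bar> - arccos (a / cmod w))"

definition a_fun :: "real \<Rightarrow> real \<Rightarrow> real \<Rightarrow> real" where
  "a_fun \<Omega> \<psi> \<tau> = - \<Omega> * cot (\<tau> * \<Omega> - \<psi>)"

definition rho_fun :: "real \<Rightarrow> real \<Rightarrow> real \<Rightarrow> real" where
  "rho_fun \<Omega> \<psi> \<tau> = - \<Omega> / sin (\<tau> * \<Omega> - \<psi>)"

definition I_c :: "real \<Rightarrow> real set" where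
  "I_c \<psi> = (if \<psi> \<ge> 0 then {0<..<\<psi>} else {\<psi><..<0})"

definition Gamma_c :: "real \<Rightarrow> real \<Rightarrow> (real \<times> complex) set" where
  "Gamma_c \<psi> \<tau> = {(a_fun \<Omega> \<psi> \<tau>, complex_of_real (rho_fun \<Omega> \<psi> \<tau>) * exp (\<i> * complex_of_real \<psi>))
                    | \<Omega>. \<tau> * \<Omega> \<in> I_c \<psi>}"

end

theory Submission
  imports Defs
begin

(* Substituting \<beta> = |\<psi>| - \<tau>|\<Omega>| shows that \<Gamma>_c(\<psi>;\<tau>) consists of the points
   (r cos \<beta>, r e^(i\<psi>)) with r > 0, 0 < \<beta> < |\<psi>| and \<tau> r sin \<beta> = |\<psi>| - \<beta>.
   Writing w = |w| e^(i Arg w) and a = |w| cos \<alpha> with \<alpha> = arccos (a/|w|), the point (sa, sw)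
   is of this form exactly when Arg w = \<psi>, r = s|w| and \<beta> = \<alpha>; as |w| sin \<alpha> = sqrt(|w|^2 - a^2),
   the remaining equation \<tau> s |w| sin \<alpha> = |Arg w| - \<alpha> says s = \<tau>_c(a,w)/\<tau>. *)

lemma mem_I_c_iff:
  assumes "\<tau> > 0"
  shows "\<tau> * \<Omega> \<in> I_c \<psi> \<longleftrightarrow> \<Omega> \<noteq> 0 \<and> sgn \<Omega> = sgn \<psi> \<and> \<tau> * \<bar>\<Omega>\<bar> < \<bar>\<psi>\<bar>"
  using assms by (auto simp: I_c_def sgn_if zero_less_mult_iff mult_less_0_iff)

lemma
  assumes "\<Omega> \<noteq> 0" "sgn \<Omega> = sgn \<psi>"
  shows a_fun_same_sign: "a_fun \<Omega> \<psi> \<tau> = \<bar>\<Omega>\<bar> * cot (\<bar>\<psi>\<bar> - \<tau> * \<bar>\<Omega>\<bar>)"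
    and rho_fun_same_sign: "rho_fun \<Omega> \<psi> \<tau> = \<bar>\<Omega>\<bar> / sin (\<bar>\<psi>\<bar> - \<tau> * \<bar>\<Omega>\<bar>)"
proof -
  define \<beta> where "\<beta> = \<bar>\<psi>\<bar> - \<tau> * \<bar>\<Omega>\<bar>"
  consider "\<Omega> > 0" "\<tau> * \<Omega> - \<psi> = - \<beta>" | "\<Omega> < 0" "\<tau> * \<Omega> - \<psi> = \<beta>"
    using assms by (auto simp: sgn_if \<beta>_def split: if_splits)
  then have "a_fun \<Omega> \<psi> \<tau> = \<bar>\<Omega>\<bar> * cot \<beta> \<and> rho_fun \<Omega> \<psi> \<tau> = \<bar>\<Omega>\<bar> / sin \<beta>"
    by cases (simp_all add: a_fun_def rho_fun_def)
  then show "a_fun \<Omega> \<psi> \<tau> = \<bar>\<Omega>\<bar> * cot (\<bar>\<psi>\<bar> - \<tau> * \<bar>\<Omega>\<bar>)"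
    and "rho_fun \<Omega> \<psi> \<tau> = \<bar>\<Omega>\<bar> / sin (\<bar>\<psi>\<bar> - \<tau> * \<bar>\<Omega>\<bar>)"
    by (simp_all add: \<beta>_def)
qed

lemma mem_Gamma_c_iff:
  assumes "\<bar>\<psi>\<bar> \<le> pi" "\<tau> > 0"
  shows "(b, z) \<in> Gamma_c \<psi> \<tau> \<longleftrightarrow>
    (\<exists>r \<beta>. 0 < r \<and> 0 < \<beta> \<and> \<beta> < \<bar>\<psi>\<bar> \<and> \<tau> * r * sin \<beta> = \<bar>\<psi>\<bar> - \<beta> \<and>
       b = r * cos \<beta> \<and> z = complex_of_real r * exp (\<i> * complex_of_real \<psi>))"
    (is "_ \<longleftrightarrow> (\<exists>r \<beta>. ?polar r \<beta>)")
proof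
  assume "(b, z) \<in> Gamma_c \<psi> \<tau>"
  then obtain \<Omega> where I: "\<tau> * \<Omega> \<in> I_c \<psi>" and b: "b = a_fun \<Omega> \<psi> \<tau>"
    and z: "z = complex_of_real (rho_fun \<Omega> \<psi> \<tau>) * exp (\<i> * complex_of_real \<psi>)"
    unfolding Gamma_c_def by auto
  define \<beta> where "\<beta> = \<bar>\<psi>\<bar> - \<tau> * \<bar>\<Omega>\<bar>"
  have \<Omega>: "\<Omega> \<noteq> 0" "sgn \<Omega> = sgn \<psi>" "\<tau> * \<bar>\<Omega>\<bar> < \<bar>\<psi>\<bar>"
    using I mem_I_c_iff[OF assms(2)] by auto
  have \<beta>: "0 < \<beta>" "\<beta> < \<bar>\<psi>\<bar>"
    using \<Omega> assms(2) by (auto simp: \<beta>_def)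
  have sin_pos: "sin \<beta> > 0"
    using \<beta> assms(1) by (intro sin_gt_zero) auto
  have "a_fun \<Omega> \<psi> \<tau> = \<bar>\<Omega>\<bar> / sin \<beta> * cos \<beta>" "rho_fun \<Omega> \<psi> \<tau> = \<bar>\<Omega>\<bar> / sin \<beta>"
    using \<Omega> by (simp_all add: a_fun_same_sign rho_fun_same_sign cot_def \<beta>_def)
  moreover have "\<tau> * (\<bar>\<Omega>\<bar> / sin \<beta>) * sin \<beta> = \<bar>\<psi>\<bar> - \<beta>"
    using sin_pos by (simp add: \<beta>_def)
  ultimately have "?polar (\<bar>\<Omega>\<bar> / sin \<beta>) \<beta>"
    using \<Omega> \<beta> sin_pos b z by simp
  then show "\<exists>r \<beta>. ?polar r \<beta>" by blast
next
  assume "\<exists>r \<beta>. ?polar r \<beta>"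
  then obtain r \<beta> where r: "0 < r" and \<beta>: "0 < \<beta>" "\<beta> < \<bar>\<psi>\<bar>"
    and eq: "\<tau> * r * sin \<beta> = \<bar>\<psi>\<bar> - \<beta>"
    and b: "b = r * cos \<beta>" and z: "z = complex_of_real r * exp (\<i> * complex_of_real \<psi>)"
    by blast
  have sin_pos: "sin \<beta> > 0"
    using \<beta> assms(1) by (intro sin_gt_zero) auto
  with r have rsin_pos: "r * sin \<beta> > 0" by simp
  define \<Omega> where "\<Omega> = sgn \<psi> * (r * sin \<beta>)"
  have "\<psi> \<noteq> 0" using \<beta> by auto
  then have abs_\<Omega>: "\<bar>\<Omega>\<bar> = r * sin \<beta>" and sgn_\<Omega>: "sgn \<Omega> = sgn \<psi>"
    using r sin_pos by (simp_all add: \<Omega>_def abs_mult sgn_mult)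
  have \<beta>_eq: "\<beta> = \<bar>\<psi>\<bar> - \<tau> * \<bar>\<Omega>\<bar>"
    using eq abs_\<Omega> by (simp add: algebra_simps)
  have "\<Omega> \<noteq> 0" using abs_\<Omega> rsin_pos by auto
  then have "a_fun \<Omega> \<psi> \<tau> = \<bar>\<Omega>\<bar> * cot \<beta>" "rho_fun \<Omega> \<psi> \<tau> = \<bar>\<Omega>\<bar> / sin \<beta>"
    using a_fun_same_sign rho_fun_same_sign sgn_\<Omega> unfolding \<beta>_eq by auto
  then have "a_fun \<Omega> \<psi> \<tau> = b" "rho_fun \<Omega> \<psi> \<tau> = r"
    using abs_\<Omega> sin_pos b by (simp_all add: cot_def)
  moreover have "\<tau> * \<Omega> \<in> I_c \<psi>"
    unfolding mem_I_c_iff[OF assms(2)] using rsin_pos abs_\<Omega> sgn_\<Omega> \<beta> \<beta>_eq by linarith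
  ultimately show "(b, z) \<in> Gamma_c \<psi> \<tau>"
    unfolding Gamma_c_def z by force
qed

lemma scaled_eq_polar_iff:
  assumes "w \<noteq> 0" "s > 0" "r > 0" "-pi < \<psi>" "\<psi> \<le> pi"
  shows "complex_of_real s * w = complex_of_real r * exp (\<i> * complex_of_real \<psi>) \<longleftrightarrow>
         r = s * cmod w \<and> Arg w = \<psi>"
proof
  assume eq: "complex_of_real s * w = complex_of_real r * exp (\<i> * complex_of_real \<psi>)"
  have "s * cmod w = r"
    using arg_cong[OF eq, of cmod] assms(2,3) by (simp add: norm_mult)
  moreover have "Arg (complex_of_real s * w) = \<psi>"
    using Arg_unique[OF eq[symmetric]] assms(3-5) by blast
  ultimately show "r = s * cmod w \<and> Arg w = \<psi>"
    using assms(2) by simp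
next
  assume "r = s * cmod w \<and> Arg w = \<psi>"
  then show "complex_of_real s * w = complex_of_real r * exp (\<i> * complex_of_real \<psi>)"
    using Arg_eq[OF assms(1)] by (metis mult.assoc of_real_mult)
qed

lemma sqrt_diff_square_eq_sin_arccos:
  fixes a c :: real
  assumes "\<bar>a\<bar> \<le> c"
  shows "sqrt (c\<^sup>2 - a\<^sup>2) = c * sin (arccos (a / c))"
proof (cases "c = 0")
  case False
  then have "c > 0" "-1 \<le> a / c" "a / c \<le> 1"
    using assms by (auto simp: field_simps abs_le_iff)
  then have "c * sin (arccos (a / c)) = sqrt (c\<^sup>2 * (1 - (a / c)\<^sup>2))"
    by (simp add: sin_arccos real_sqrt_mult)
  also have "\<dots> = sqrt (c\<^sup>2 - a\<^sup>2)"
    using \<open>c > 0\<close> by (simp add: power_divide field_simps)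
  finally show ?thesis ..
qed (use assms in simp)

lemma abs_lt_cmod_if_mem_D_c:
  assumes "(a, w) \<in> D_c"
  shows "\<bar>a\<bar> < cmod w"
  using assms abs_Re_le_cmod[of w] by (auto simp: D_c_def)

lemma mem_Gamma_c_scaled_iff:
  assumes "-pi < \<psi>" "\<psi> \<le> pi" "\<tau> > 0" "w \<noteq> 0" "s > 0"
  shows "(b, complex_of_real s * w) \<in> Gamma_c \<psi> \<tau> \<longleftrightarrow> Arg w = \<psi> \<and>
    (\<exists>\<beta>. 0 < \<beta> \<and> \<beta> < \<bar>\<psi>\<bar> \<and> \<tau> * (s * cmod w) * sin \<beta> = \<bar>\<psi>\<bar> - \<beta> \<and>
       b = s * cmod w * cos \<beta>)"
    (is "_ \<longleftrightarrow> Arg w = \<psi> \<and> (\<exists>\<beta>. ?P \<beta>)")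
proof -
  have polar_iff: "complex_of_real s * w = complex_of_real r * exp (\<i> * complex_of_real \<psi>) \<longleftrightarrow>
        r = s * cmod w \<and> Arg w = \<psi>" if "r > 0" for r
    using scaled_eq_polar_iff[OF assms(4,5) that assms(1,2)] .
  have "\<bar>\<psi>\<bar> \<le> pi" using assms(1,2) by simp
  note Gamma_iff = mem_Gamma_c_iff[OF this assms(3)]
  show ?thesis
  proof
    assume "(b, complex_of_real s * w) \<in> Gamma_c \<psi> \<tau>"
    then obtain r \<beta> where r: "0 < r" and \<beta>: "0 < \<beta>" "\<beta> < \<bar>\<psi>\<bar>"
      and eq: "\<tau> * r * sin \<beta> = \<bar>\<psi>\<bar> - \<beta>" "b = r * cos \<beta>"
      and z: "complex_of_real s * w = complex_of_real r * exp (\<i> * complex_of_real \<psi>)"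
      unfolding Gamma_iff by blast
    have "r = s * cmod w \<and> Arg w = \<psi>" using polar_iff[OF r] z ..
    with \<beta> eq show "Arg w = \<psi> \<and> (\<exists>\<beta>. ?P \<beta>)" by auto
  next
    assume "Arg w = \<psi> \<and> (\<exists>\<beta>. ?P \<beta>)"
    then obtain \<beta> where Arg: "Arg w = \<psi>" and P: "?P \<beta>" by blast
    have r: "s * cmod w > 0" using assms(4,5) by simp
    then have "complex_of_real s * w = complex_of_real (s * cmod w) * exp (\<i> * complex_of_real \<psi>)"
      using Arg by (subst polar_iff[OF r]) simp
    with r P show "(b, complex_of_real s * w) \<in> Gamma_c \<psi> \<tau>"
      unfolding Gamma_iff by (intro exI[of _ "s * cmod w"] exI[of _ \<beta>]) simp
  qed
qed

lemma scaled_mem_Gamma_c_iff: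
  assumes "-pi < \<psi>" "\<psi> \<le> pi" "\<tau> > 0" "(a, w) \<in> D_c" "s > 0"
  shows "(s * a, complex_of_real s * w) \<in> Gamma_c \<psi> \<tau> \<longleftrightarrow>
    Arg w = \<psi> \<and> \<tau> * s * sqrt ((cmod w)\<^sup>2 - a\<^sup>2) = \<bar>\<psi>\<bar> - arccos (a / cmod w)"
proof -
  define \<alpha> where "\<alpha> = arccos (a / cmod w)"
  have w: "w \<noteq> 0" and a: "\<bar>a\<bar> < cmod w"
    using assms(4) abs_lt_cmod_if_mem_D_c by (auto simp: D_c_def)
  then have "-1 < a / cmod w" "a / cmod w < 1"
    by (auto simp: field_simps abs_less_iff)
  then have \<alpha>: "0 < \<alpha>" "\<alpha> < pi" and cos_\<alpha>: "a = cmod w * cos \<alpha>"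
    using arccos_lt_bounded w by (auto simp: \<alpha>_def)
  have sin_pos: "sin \<alpha> > 0"
    using \<alpha> by (intro sin_gt_zero) auto
  have sqrt_eq: "sqrt ((cmod w)\<^sup>2 - a\<^sup>2) = cmod w * sin \<alpha>"
    using a by (simp add: sqrt_diff_square_eq_sin_arccos \<alpha>_def)
  have cos_iff: "s * a = s * cmod w * cos \<beta> \<longleftrightarrow> \<beta> = \<alpha>" if "0 < \<beta>" "\<beta> < pi" for \<beta>
  proof -
    have "s * a = s * cmod w * cos \<beta> \<longleftrightarrow> cos \<beta> = cos \<alpha>"
      using assms(5) w by (auto simp: cos_\<alpha>)
    also have "\<dots> \<longleftrightarrow> \<beta> = \<alpha>"
      using that \<alpha> cos_inj_pi[of \<beta> \<alpha>] by auto
    finally show ?thesis .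
  qed
  have "(\<exists>\<beta>. 0 < \<beta> \<and> \<beta> < \<bar>\<psi>\<bar> \<and> \<tau> * (s * cmod w) * sin \<beta> = \<bar>\<psi>\<bar> - \<beta> \<and>
          s * a = s * cmod w * cos \<beta>) \<longleftrightarrow>
        \<alpha> < \<bar>\<psi>\<bar> \<and> \<tau> * (s * cmod w) * sin \<alpha> = \<bar>\<psi>\<bar> - \<alpha>"
  proof
    assume "\<exists>\<beta>. 0 < \<beta> \<and> \<beta> < \<bar>\<psi>\<bar> \<and> \<tau> * (s * cmod w) * sin \<beta> = \<bar>\<psi>\<bar> - \<beta> \<and>
      s * a = s * cmod w * cos \<beta>"
    then obtain \<beta> where \<beta>: "0 < \<beta>" "\<beta> < \<bar>\<psi>\<bar>" "\<tau> * (s * cmod w) * sin \<beta> = \<bar>\<psi>\<bar> - \<beta>"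
      and cos_eq: "s * a = s * cmod w * cos \<beta>" by blast
    have "\<beta> < pi" using \<beta>(2) assms(1,2) by linarith
    with \<beta>(1) cos_eq have "\<beta> = \<alpha>" using cos_iff by blast
    with \<beta> show "\<alpha> < \<bar>\<psi>\<bar> \<and> \<tau> * (s * cmod w) * sin \<alpha> = \<bar>\<psi>\<bar> - \<alpha>" by simp
  qed (use \<alpha> cos_iff in blast)
  then have "(s * a, complex_of_real s * w) \<in> Gamma_c \<psi> \<tau> \<longleftrightarrow>
      Arg w = \<psi> \<and> \<alpha> < \<bar>\<psi>\<bar> \<and> \<tau> * (s * cmod w) * sin \<alpha> = \<bar>\<psi>\<bar> - \<alpha>"
    by (simp only: mem_Gamma_c_scaled_iff[OF assms(1-3) w assms(5)])
  also have "\<dots> \<longleftrightarrow> Arg w = \<psi> \<and> \<tau> * s * sqrt ((cmod w)\<^sup>2 - a\<^sup>2) = \<bar>\<psi>\<bar> - \<alpha>"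
  proof -
    \<comment> \<open>the equation forces \<alpha> < |\<psi>|, its left-hand side being positive\<close>
    have "\<tau> * (s * cmod w) * sin \<alpha> > 0"
      using assms(3,5) w sin_pos by simp
    then show ?thesis
      by (auto simp: sqrt_eq mult.assoc)
  qed
  finally show ?thesis by (simp add: \<alpha>_def)
qed

theorem mainTheorem18:
  fixes \<psi> \<tau> :: real
  assumes "-pi < \<psi>" "\<psi> \<le> pi" "\<tau> > 0"
  shows "\<forall>a w s. (a, w) \<in> D_c \<longrightarrow> s > 0 \<longrightarrow>
           ((s * a, complex_of_real s * w) \<in> Gamma_c \<psi> \<tau> \<longleftrightarrow>
            (s = tau_c a w / \<tau> \<and> Arg w = \<psi>))"
proof (intro allI impI)
  fix a s :: real and w :: complex
  assume D: "(a, w) \<in> D_c" and s: "s > 0"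
  have "a\<^sup>2 < (cmod w)\<^sup>2"
    using power_strict_mono[OF abs_lt_cmod_if_mem_D_c[OF D] abs_ge_zero, of 2] by simp
  then have "sqrt ((cmod w)\<^sup>2 - a\<^sup>2) > 0" by simp
  then have "s = tau_c a w / \<tau> \<longleftrightarrow>
      \<tau> * s * sqrt ((cmod w)\<^sup>2 - a\<^sup>2) = \<bar>Arg w\<bar> - arccos (a / cmod w)"
    using assms(3) by (auto simp: tau_c_def field_simps)
  then show "(s * a, complex_of_real s * w) \<in> Gamma_c \<psi> \<tau> \<longleftrightarrow>
      (s = tau_c a w / \<tau> \<and> Arg w = \<psi>)"
    using scaled_mem_Gamma_c_iff[OF assms D s] by auto
qed

end
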